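(* Let $(\bar F,\bar\Delta,\bar\nu)$ be a probability preserving dynamical system with transfer operator $\mathcal L$, let $\bar\phi:\bar\Delta\to\mathbb R$ be measurable and set $\mathcal L_{is}h:=\mathcal L(e^{is\bar\phi}h)$ for $s\in\mathbb R$. Let $\mathcal B_1\hookrightarrow\mathcal B_2\hookrightarrow L^1(\bar\nu)$ be complex Banach spaces with $\mathbf 1_{\bar\Delta}\in\mathcal B_1$ on which the operators $\mathcal L_{is}^n$ act, and assume there exist constants $\alpha_1\in(0,1]$, $K,C,\alpha>0$ and an integer $n_0$ such that $$\forall n\ge n_0,\ \forall |s|>K:\qquad \|\mathcal L^n_{is}\|_{\mathcal B_1\to\mathcal B_2}\le C|s|^\alpha e^{-Cn^{\alpha_1}}.$$ Then: (i) there exist $K'>0$, $C'>0$, $\alpha'\ge0$, $\alpha_1'\in(0,1]$, $\hat\delta>0$ and $n_1$ such that for every $|s|>K'$ and every $n\ge n_1$, $\|\mathcal L^n_{is}\|_{\mathcal B_1\to\mathcal B_2}\le C'|s|^{\alpha'}e^{-n^{\alpha_1'}\hat\delta|s|^{-\alpha'}}$; (ii) for every $r\ge0$, every $d_1\in[0,1]$ and every $B>0$ there exists $K''>0$ such that $\displaystyle\int_{K''<|s|<Bn^{(r-1)/2}}\frac{\|\mathcal L^n_{is}\|_{\mathcal B_1\to\mathcal B_2}}{|s|^{d_1}}\,ds=o(n^{-r/2})$ as $n\to\infty$.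
   Context: The transfer operator $\mathcal L$ of $(\bar F,\bar\Delta,\bar\nu)$ is the operator on $L^1(\bar\nu)$ characterized by $\mathbb E_{\bar\nu}(g\cdot h\circ\bar F)=\mathbb E_{\bar\nu}(h\,\mathcal L g)$ for all $g\in L^1$, $h\in L^\infty$. $\hookrightarrow$ denotes continuous embedding. $\|\cdot\|_{\mathcal B_1\to\mathcal B_2}$ is the operator norm from $\mathcal B_1$ to $\mathcal B_2$. *)

theory Defs
  imports "HOL-Probability.Probability" "HOL-Library.Landau_Symbols"
begin

definition prob_preserving_system :: "'a measure \<Rightarrow> ('a \<Rightarrow> 'a) \<Rightarrow> bool" where
  "prob_preserving_system M F \<longleftrightarrow> prob_space M \<and> F \<in> M \<rightarrow>\<^sub>M M \<and> distr M M F = M"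

definition transfer_operator ::
  "'a measure \<Rightarrow> ('a \<Rightarrow> 'a) \<Rightarrow> (('a \<Rightarrow> complex) \<Rightarrow> ('a \<Rightarrow> complex)) \<Rightarrow> bool" where
  "transfer_operator M F L \<longleftrightarrow>
     (\<forall>g. integrable M g \<longrightarrow> integrable M (L g) \<and>
        (\<forall>h::'a \<Rightarrow> complex. h \<in> borel_measurable M \<and> (\<exists>c. \<forall>x\<in>space M. cmod (h x) \<le> c) \<longrightarrow>
           (\<integral>x. g x * h (F x) \<partial>M) = (\<integral>x. h x * L g x \<partial>M)))"

definition complex_banach_in_L1 ::
  "'a measure \<Rightarrow> ('a \<Rightarrow> complex) set \<Rightarrow> (('a \<Rightarrow> complex) \<Rightarrow> real) \<Rightarrow> bool" where
  "complex_banach_in_L1 M B nB \<longleftrightarrow>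
     B \<subseteq> {f. integrable M f} \<and>
     (\<lambda>_. 0) \<in> B \<and>
     (\<forall>f\<in>B. \<forall>g\<in>B. (\<lambda>x. f x + g x) \<in> B) \<and>
     (\<forall>c f. f \<in> B \<longrightarrow> (\<lambda>x. c * f x) \<in> B) \<and>
     (\<forall>f\<in>B. \<forall>g. g \<in> borel_measurable M \<and> (AE x in M. g x = f x) \<longrightarrow> g \<in> B \<and> nB g = nB f) \<and>
     (\<forall>f\<in>B. 0 \<le> nB f) \<and>
     (\<forall>f\<in>B. nB f = 0 \<longleftrightarrow> (AE x in M. f x = 0)) \<and>
     (\<forall>f\<in>B. \<forall>g\<in>B. nB (\<lambda>x. f x + g x) \<le> nB f + nB g) \<and>
     (\<forall>c. \<forall>f\<in>B. nB (\<lambda>x. c * f x) = cmod c * nB f) \<and>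
     (\<forall>X. (\<forall>k. X k \<in> B) \<and>
          (\<forall>e>0. \<exists>N. \<forall>m\<ge>N. \<forall>k\<ge>N. nB (\<lambda>x. X m x - X k x) < e) \<longrightarrow>
          (\<exists>f\<in>B. (\<lambda>k. nB (\<lambda>x. X k x - f x)) \<longlonglongrightarrow> 0))"

definition cont_embedding ::
  "('a \<Rightarrow> complex) set \<Rightarrow> (('a \<Rightarrow> complex) \<Rightarrow> real) \<Rightarrow> ('a \<Rightarrow> complex) set \<Rightarrow> (('a \<Rightarrow> complex) \<Rightarrow> real) \<Rightarrow> bool" where
  "cont_embedding B1 n1 B2 n2 \<longleftrightarrow> B1 \<subseteq> B2 \<and> (\<exists>c. \<forall>f\<in>B1. n2 f \<le> c * n1 f)"

definition L1_embedding ::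
  "'a measure \<Rightarrow> ('a \<Rightarrow> complex) set \<Rightarrow> (('a \<Rightarrow> complex) \<Rightarrow> real) \<Rightarrow> bool" where
  "L1_embedding M B nB \<longleftrightarrow> B \<subseteq> {f. integrable M f} \<and> (\<exists>c. \<forall>f\<in>B. (\<integral>x. cmod (f x) \<partial>M) \<le> c * nB f)"

definition op_norm ::
  "('a \<Rightarrow> complex) set \<Rightarrow> (('a \<Rightarrow> complex) \<Rightarrow> real) \<Rightarrow> (('a \<Rightarrow> complex) \<Rightarrow> real) \<Rightarrow>
   (('a \<Rightarrow> complex) \<Rightarrow> ('a \<Rightarrow> complex)) \<Rightarrow> real" where
  "op_norm B1 n1 n2 T = Sup {n2 (T f) | f. f \<in> B1 \<and> n1 f \<le> 1}"

definition twisted :: "(('a \<Rightarrow> complex) \<Rightarrow> ('a \<Rightarrow> complex)) \<Rightarrow> ('a \<Rightarrow> real) \<Rightarrow> real \<Rightarrow>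
   ('a \<Rightarrow> complex) \<Rightarrow> ('a \<Rightarrow> complex)" where
  "twisted L \<phi> s h = L (\<lambda>x. exp (\<i> * of_real (s * \<phi> x)) * h x)"

end

theory Submission
  imports Defs "HOL-Real_Asymp.Real_Asymp"
begin

text \<open>
  Part (i) is immediate: for |s| \<ge> 1 the factor |s| powr -\<alpha> only weakens the assumed
  stretched exponential decay. For part (ii), on K < |s| < B n^((r-1)/2) the integrand is at
  most C (B n^((r-1)/2)) powr \<alpha> exp (-C n powr \<alpha>1), on a range of length O(n^((r-1)/2)),
  and a stretched exponential beats every power of n.

  The subtle point is a lower bound for the integrand: the operator norm is a supremum, which
  is only meaningful (and then nonnegative) if the iterate of the twisted transfer operator is
  bounded from B1 to B2. This follows from the closed graph theorem: the iterate is linear and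
  contracts the L1 norm, and B1 and B2 embed continuously into L1, so its graph is closed.
  The closed graph theorem itself is proved in the classical way from Baire's theorem,
  applied to B1 modulo null functions.
\<close>

section \<open>Baire category theorem for complete pseudometrics\<close>

locale pseudometric =
  fixes X :: "'a set" and \<rho> :: "'a \<Rightarrow> 'a \<Rightarrow> real"
  assumes nonneg: "x \<in> X \<Longrightarrow> y \<in> X \<Longrightarrow> 0 \<le> \<rho> x y"
    and commute: "x \<in> X \<Longrightarrow> y \<in> X \<Longrightarrow> \<rho> x y = \<rho> y x"
    and refl: "x \<in> X \<Longrightarrow> \<rho> x x = 0"
    and triangle: "x \<in> X \<Longrightarrow> y \<in> X \<Longrightarrow> z \<in> X \<Longrightarrow> \<rho> x z \<le> \<rho> x y + \<rho> y z"
begin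

text \<open>
  The library's Baire theorem is about metric spaces, so we pass to the quotient by
  \<open>\<rho> x y = 0\<close>, realised by a choice of representatives.
\<close>

definition rep :: "'a \<Rightarrow> 'a" where
  "rep x = (SOME y. y \<in> X \<and> \<rho> x y = 0)"

lemma rep_mem: "x \<in> X \<Longrightarrow> rep x \<in> X"
  and dist_rep_self: "x \<in> X \<Longrightarrow> \<rho> x (rep x) = 0"
  using someI[of "\<lambda>y. y \<in> X \<and> \<rho> x y = 0" x] refl unfolding rep_def by auto

lemma rep_image_subset: "rep ` X \<subseteq> X"
  using rep_mem by blast

lemma dist_zero_trans:
  assumes "x \<in> X" "y \<in> X" "z \<in> X" "\<rho> x y = 0"
  shows "\<rho> x z = \<rho> y z"
  using triangle[of x y z] triangle[of y x z] commute[of x y] assms by auto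

lemma dist_rep [simp]:
  assumes "x \<in> X" "y \<in> X"
  shows "\<rho> (rep x) y = \<rho> x y" and "\<rho> y (rep x) = \<rho> y x"
proof -
  have "\<rho> (rep x) x = 0"
    using dist_rep_self[OF assms(1)] commute[OF assms(1) rep_mem[OF assms(1)]] by simp
  then show *: "\<rho> (rep x) y = \<rho> x y"
    using dist_zero_trans[of "rep x" x y] assms rep_mem by blast
  show "\<rho> y (rep x) = \<rho> y x"
    using * commute[of "rep x" y] commute[of x y] assms rep_mem by simp
qed

lemma rep_cong:
  assumes "x \<in> X" "y \<in> X" "\<rho> x y = 0"
  shows "rep x = rep y"
proof -
  have "(\<lambda>z. z \<in> X \<and> \<rho> x z = 0) = (\<lambda>z. z \<in> X \<and> \<rho> y z = 0)"
    using dist_zero_trans[OF assms(1,2) _ assms(3)] assms by auto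
  then show ?thesis unfolding rep_def by simp
qed

text \<open>The junk value 0 off \<open>rep ` X\<close> is there because \<^locale>\<open>Metric_space\<close> demands
  nonnegativity and symmetry on the whole type.\<close>

definition quotient_dist :: "'a \<Rightarrow> 'a \<Rightarrow> real" where
  "quotient_dist a b = (if a \<in> rep ` X \<and> b \<in> rep ` X then \<rho> a b else 0)"

lemma quotient_dist_rep [simp]:
  "x \<in> X \<Longrightarrow> y \<in> X \<Longrightarrow> quotient_dist (rep x) (rep y) = \<rho> x y"
  unfolding quotient_dist_def using rep_mem by simp

abbreviation quotient_topology :: "'a topology" where
  "quotient_topology \<equiv> Metric_space.mtopology (rep ` X) quotient_dist"

lemma Metric_space_quotient: "Metric_space (rep ` X) quotient_dist"
proof
  show "0 \<le> quotient_dist a b" "quotient_dist a b = quotient_dist b a" for a b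
    unfolding quotient_dist_def using nonneg commute rep_mem by auto
  show "quotient_dist a b = 0 \<longleftrightarrow> a = b" if ab: "a \<in> rep ` X" "b \<in> rep ` X" for a b
  proof -
    obtain x y where "x \<in> X" "y \<in> X" "a = rep x" "b = rep y"
      using ab by blast
    moreover have "\<rho> x y = 0" if "rep x = rep y"
      using dist_rep(1)[of x y] dist_rep(1)[of y y] refl \<open>x \<in> X\<close> \<open>y \<in> X\<close> that by simp
    ultimately show ?thesis
      using rep_cong[of x y] refl by auto
  qed
  show "quotient_dist a c \<le> quotient_dist a b + quotient_dist b c"
    if abc: "a \<in> rep ` X" "b \<in> rep ` X" "c \<in> rep ` X" for a b c
  proof -
    obtain x y z where "x \<in> X" "y \<in> X" "z \<in> X" "a = rep x" "b = rep y" "c = rep z"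
      using abc by blast
    then show ?thesis
      using triangle[of x y z] by simp
  qed
qed

end

locale complete_pseudometric = pseudometric +
  assumes complete: "\<And>\<sigma>. (\<And>n. \<sigma> n \<in> X) \<Longrightarrow> (\<And>e. e > 0 \<Longrightarrow> \<exists>N. \<forall>m\<ge>N. \<forall>n\<ge>N. \<rho> (\<sigma> m) (\<sigma> n) < e)
      \<Longrightarrow> \<exists>x\<in>X. (\<lambda>n. \<rho> (\<sigma> n) x) \<longlonglongrightarrow> 0"
begin

lemma mcomplete_quotient: "Metric_space.mcomplete (rep ` X) quotient_dist"
proof -
  interpret Q: Metric_space "rep ` X" quotient_dist
    by (rule Metric_space_quotient)
  show ?thesis
    unfolding Q.mcomplete_def Q.MCauchy_def
  proof (intro allI impI, elim conjE)
    fix \<sigma> :: "nat \<Rightarrow> 'a" assume range: "range \<sigma> \<subseteq> rep ` X"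
      and Cauchy: "\<forall>\<epsilon>>0. \<exists>N. \<forall>n n'. N \<le> n \<longrightarrow> N \<le> n' \<longrightarrow> quotient_dist (\<sigma> n) (\<sigma> n') < \<epsilon>"
    have \<sigma>: "\<sigma> n \<in> rep ` X" "\<sigma> n \<in> X" for n
      using range rep_image_subset by blast+
    have "\<exists>x\<in>X. (\<lambda>n. \<rho> (\<sigma> n) x) \<longlonglongrightarrow> 0"
    proof (rule complete)
      show "\<sigma> n \<in> X" for n
        by (rule \<sigma>(2))
      fix e :: real assume "e > 0"
      then obtain N where "\<forall>n n'. N \<le> n \<longrightarrow> N \<le> n' \<longrightarrow> quotient_dist (\<sigma> n) (\<sigma> n') < e"
        using Cauchy by blast
      then show "\<exists>N. \<forall>m\<ge>N. \<forall>n\<ge>N. \<rho> (\<sigma> m) (\<sigma> n) < e"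
        using \<sigma>(1) by (auto simp: quotient_dist_def)
    qed
    then obtain x where x: "x \<in> X" "(\<lambda>n. \<rho> (\<sigma> n) x) \<longlonglongrightarrow> 0"
      by blast
    have "(\<lambda>n. quotient_dist (\<sigma> n) (rep x)) \<longlonglongrightarrow> 0"
      using x \<sigma> by (simp add: quotient_dist_def)
    then have "limitin Q.mtopology \<sigma> (rep x) sequentially"
      unfolding Q.limitin_metric_dist_null using x(1) \<sigma> by simp
    then show "\<exists>x. limitin Q.mtopology \<sigma> x sequentially" ..
  qed
qed

lemma quotient_closure_has_interior:
  fixes E :: "nat \<Rightarrow> 'a set"
  assumes "X \<noteq> {}" and cover: "X \<subseteq> (\<Union>k. E k)" and "\<And>k. E k \<subseteq> X"
  shows "\<exists>k. quotient_topology interior_of (quotient_topology closure_of (rep ` E k)) \<noteq> {}"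
proof (rule ccontr)
  interpret Q: Metric_space "rep ` X" quotient_dist
    by (rule Metric_space_quotient)
  let ?cl = "\<lambda>k. Q.mtopology closure_of (rep ` E k)"
  assume "\<nexists>k. Q.mtopology interior_of ?cl k \<noteq> {}"
  then have "Q.mtopology interior_of \<Union>(range ?cl) = {}"
    by (intro Q.metric_Baire_category_alt[OF mcomplete_quotient]) auto
  moreover have "\<Union>(range ?cl) = rep ` X"
  proof (rule subset_antisym)
    show "\<Union>(range ?cl) \<subseteq> rep ` X"
      using closure_of_subset_topspace[of Q.mtopology] by (simp only: Q.topspace_mtopology UN_least)
    have rep_in_cl: "rep x \<in> ?cl k" if "x \<in> E k" for x k
    proof -
      have "rep ` E k \<subseteq> rep ` X"
        using \<open>E k \<subseteq> X\<close> by (rule image_mono)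
      then have "rep ` E k \<subseteq> ?cl k"
        by (intro closure_of_subset) (simp only: Q.topspace_mtopology)
      then show ?thesis
        using that by blast
    qed
    show "rep ` X \<subseteq> \<Union>(range ?cl)"
    proof
      fix a assume "a \<in> rep ` X"
      then obtain x k where "x \<in> E k" "a = rep x"
        using cover by blast
      then show "a \<in> \<Union>(range ?cl)"
        using rep_in_cl by blast
    qed
  qed
  ultimately show False
    using \<open>X \<noteq> {}\<close> interior_of_topspace[of Q.mtopology] by simp
qed

theorem Baire:
  fixes E :: "nat \<Rightarrow> 'a set"
  assumes "X \<noteq> {}" and "X \<subseteq> (\<Union>k. E k)" and "\<And>k. E k \<subseteq> X"
  shows "\<exists>k. \<exists>x0\<in>X. \<exists>\<epsilon>>0. \<forall>y\<in>X. \<rho> x0 y < \<epsilon> \<longrightarrow> (\<forall>\<delta>>0. \<exists>z\<in>E k. \<rho> y z < \<delta>)"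
proof -
  interpret Q: Metric_space "rep ` X" quotient_dist
    by (rule Metric_space_quotient)
  obtain k a where "a \<in> Q.mtopology interior_of (Q.mtopology closure_of (rep ` E k))"
    using quotient_closure_has_interior[OF assms] by blast
  then obtain \<epsilon> where a: "a \<in> rep ` X" "\<epsilon> > 0" "Q.mball a \<epsilon> \<subseteq> Q.mtopology closure_of (rep ` E k)"
    unfolding Q.in_interior_of_mball by blast
  then obtain x0 where x0: "x0 \<in> X" "a = rep x0"
    by blast
  have "\<exists>z\<in>E k. \<rho> y z < \<delta>" if y: "y \<in> X" "\<rho> x0 y < \<epsilon>" and "\<delta> > 0" for y \<delta>
  proof -
    have "rep y \<in> Q.mball a \<epsilon>"
      using x0 y by simp
    then obtain z where z: "z \<in> E k" "rep z \<in> Q.mball (rep y) \<delta>"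
      using a(3) \<open>\<delta> > 0\<close> unfolding Q.metric_closure_of by blast
    moreover have "z \<in> X"
      using z(1) \<open>E k \<subseteq> X\<close> by blast
    ultimately show ?thesis
      using y(1) by auto
  qed
  then show ?thesis
    using x0 a by blast
qed

end

section \<open>Complex Banach spaces of integrable functions\<close>

locale banach_in_L1 =
  fixes M :: "'a measure" and B :: "('a \<Rightarrow> complex) set" and nB :: "('a \<Rightarrow> complex) \<Rightarrow> real"
  assumes banach: "complex_banach_in_L1 M B nB"
begin

lemma integrable_mem: "f \<in> B \<Longrightarrow> integrable M f"
  and zero_mem: "(\<lambda>_. 0) \<in> B"
  and add_mem: "f \<in> B \<Longrightarrow> g \<in> B \<Longrightarrow> (\<lambda>x. f x + g x) \<in> B"
  and scale_mem: "f \<in> B \<Longrightarrow> (\<lambda>x. c * f x) \<in> B"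
  and AE_cong: "f \<in> B \<Longrightarrow> g \<in> borel_measurable M \<Longrightarrow> (AE x in M. g x = f x) \<Longrightarrow> g \<in> B \<and> nB g = nB f"
  and norm_nonneg: "f \<in> B \<Longrightarrow> 0 \<le> nB f"
  and norm_eq_zero_iff: "f \<in> B \<Longrightarrow> nB f = 0 \<longleftrightarrow> (AE x in M. f x = 0)"
  and norm_triangle: "f \<in> B \<Longrightarrow> g \<in> B \<Longrightarrow> nB (\<lambda>x. f x + g x) \<le> nB f + nB g"
  and norm_scale: "f \<in> B \<Longrightarrow> nB (\<lambda>x. c * f x) = cmod c * nB f"
  and complete: "(\<And>k. X k \<in> B) \<Longrightarrow> (\<forall>e>0. \<exists>N. \<forall>m\<ge>N. \<forall>k\<ge>N. nB (\<lambda>x. X m x - X k x) < e) \<Longrightarrow>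
      \<exists>f\<in>B. (\<lambda>k. nB (\<lambda>x. X k x - f x)) \<longlonglongrightarrow> 0"
  using banach unfolding complex_banach_in_L1_def by blast+

lemma measurable_mem: "f \<in> B \<Longrightarrow> f \<in> borel_measurable M"
  using integrable_mem by auto

lemma lincomb_mem: "f \<in> B \<Longrightarrow> g \<in> B \<Longrightarrow> (\<lambda>x. a * f x + b * g x) \<in> B"
  using add_mem scale_mem by auto

lemma diff_mem: "f \<in> B \<Longrightarrow> g \<in> B \<Longrightarrow> (\<lambda>x. f x - g x) \<in> B"
  using lincomb_mem[of f g 1 "-1"] by simp

lemma norm_zero [simp]: "nB (\<lambda>_. 0) = 0"
  using norm_eq_zero_iff[OF zero_mem] by simp

lemma norm_uminus: "f \<in> B \<Longrightarrow> nB (\<lambda>x. - f x) = nB f"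
  using norm_scale[of f "-1"] by simp

lemma norm_minus_commute: "f \<in> B \<Longrightarrow> g \<in> B \<Longrightarrow> nB (\<lambda>x. f x - g x) = nB (\<lambda>x. g x - f x)"
  using norm_uminus[OF diff_mem, of g f] by simp

lemma norm_triangle_diff:
  "f \<in> B \<Longrightarrow> g \<in> B \<Longrightarrow> h \<in> B \<Longrightarrow> nB (\<lambda>x. f x - h x) \<le> nB (\<lambda>x. f x - g x) + nB (\<lambda>x. g x - h x)"
  using norm_triangle[OF diff_mem diff_mem, of f g g h] by simp

lemma complete_pseudometric_norm_dist: "complete_pseudometric B (\<lambda>f g. nB (\<lambda>x. f x - g x))"
proof unfold_locales
  show "0 \<le> nB (\<lambda>x. f x - g x)" if "f \<in> B" "g \<in> B" for f g
    using that by (intro norm_nonneg diff_mem)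
  show "nB (\<lambda>x. f x - g x) = nB (\<lambda>x. g x - f x)" if "f \<in> B" "g \<in> B" for f g
    using that by (rule norm_minus_commute)
  show "nB (\<lambda>x. f x - f x) = 0" for f
    by simp
  show "nB (\<lambda>x. f x - h x) \<le> nB (\<lambda>x. f x - g x) + nB (\<lambda>x. g x - h x)"
    if "f \<in> B" "g \<in> B" "h \<in> B" for f g h
    using that by (rule norm_triangle_diff)
  show "\<exists>f\<in>B. (\<lambda>n. nB (\<lambda>x. X n x - f x)) \<longlonglongrightarrow> 0"
    if "\<And>n. X n \<in> B" "\<And>e. e > 0 \<Longrightarrow> \<exists>N. \<forall>m\<ge>N. \<forall>n\<ge>N. nB (\<lambda>x. X m x - X n x) < e" for X
    using complete that by blast
qed

lemma L1_norm_tendsto_zero: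
  assumes "L1_embedding M B nB" "\<And>k. X k \<in> B" "(\<lambda>k. nB (X k)) \<longlonglongrightarrow> 0"
  shows "(\<lambda>k. \<integral>x. cmod (X k x) \<partial>M) \<longlonglongrightarrow> 0"
proof -
  obtain c where c: "\<And>f. f \<in> B \<Longrightarrow> (\<integral>x. cmod (f x) \<partial>M) \<le> c * nB f"
    using assms(1) unfolding L1_embedding_def by blast
  show ?thesis
  proof (rule tendsto_sandwich[of "\<lambda>_. 0" _ _ "\<lambda>k. c * nB (X k)"])
    show "\<forall>\<^sub>F k in sequentially. (\<integral>x. cmod (X k x) \<partial>M) \<le> c * nB (X k)"
      using c assms(2) by simp
    show "(\<lambda>k. c * nB (X k)) \<longlonglongrightarrow> 0"
      by (rule tendsto_mult_right_zero[OF assms(3)])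
  qed simp_all
qed

lemma norm_diff_le_geometric_tail:
  assumes w: "\<And>m. w m \<in> B" and incr: "\<And>m. nB (\<lambda>x. w (Suc m) x - w m x) \<le> a * (1/2)^m"
    and "m \<le> n"
  shows "nB (\<lambda>x. w n x - w m x) \<le> 2 * a * (1/2)^m"
proof -
  have tail: "nB (\<lambda>x. w (m + p) x - w m x) \<le> 2 * a * ((1/2)^m - (1/2)^(m + p))" for p
  proof (induction p)
    case (Suc p)
    have "nB (\<lambda>x. w (m + Suc p) x - w m x)
        \<le> nB (\<lambda>x. w (Suc (m + p)) x - w (m + p) x) + nB (\<lambda>x. w (m + p) x - w m x)"
      using norm_triangle_diff[OF w w w] by simp
    also have "\<dots> \<le> 2 * a * ((1/2)^m - (1/2)^(m + Suc p))"
      using incr[of "m + p"] Suc by (simp add: algebra_simps)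
    finally show ?case .
  qed simp
  have "nB (\<lambda>x. w 1 x - w 0 x) \<le> a"
    using incr[of 0] by simp
  then have "0 \<le> 2 * a * (1/2)^n"
    using norm_nonneg[OF diff_mem[OF w w], of 1 0] by simp
  then show ?thesis
    using tail[of "n - m"] \<open>m \<le> n\<close> by (simp add: right_diff_distrib)
qed

lemma convergent_if_geometric_increments:
  assumes w: "\<And>m. w m \<in> B" and incr: "\<And>m. nB (\<lambda>x. w (Suc m) x - w m x) \<le> a * (1/2)^m"
  shows "\<exists>v\<in>B. (\<lambda>m. nB (\<lambda>x. w m x - v x)) \<longlonglongrightarrow> 0 \<and> nB v \<le> nB (w 0) + 2 * a"
proof -
  note tail = norm_diff_le_geometric_tail[OF w incr]
  have "0 \<le> a"
    using tail[of 0 0] by simp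
  have "\<exists>N. \<forall>m\<ge>N. \<forall>n\<ge>N. nB (\<lambda>x. w m x - w n x) < e" if "e > 0" for e
  proof -
    have "(\<lambda>N. 2 * a * (1/2)^N) \<longlonglongrightarrow> 0"
      by (intro tendsto_mult_right_zero LIMSEQ_power_zero) simp
    from order_tendstoD(2)[OF this \<open>e > 0\<close>] obtain N where N: "2 * a * (1/2)^N < e"
      unfolding eventually_sequentially by blast
    have "nB (\<lambda>x. w m x - w n x) < e" if "N \<le> m" "N \<le> n" for m n
    proof -
      have "nB (\<lambda>x. w m x - w n x) \<le> 2 * a * (1/2)^(min m n)"
        using tail[of m n] tail[of n m] norm_minus_commute[OF w w, of m n] by (cases "m \<le> n") auto
      also have "\<dots> \<le> 2 * a * (1/2)^N"
        using that \<open>0 \<le> a\<close> by (intro mult_left_mono power_decreasing) auto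
      finally show ?thesis
        using N by linarith
    qed
    then show ?thesis
      by blast
  qed
  then obtain v where v: "v \<in> B" "(\<lambda>m. nB (\<lambda>x. w m x - v x)) \<longlonglongrightarrow> 0"
    using complete[of w] w by blast
  have "nB v \<le> nB (\<lambda>x. w m x - v x) + (nB (w 0) + 2 * a)" for m
  proof -
    have "nB v \<le> nB (\<lambda>x. v x - w m x) + nB (w m)"
      using norm_triangle_diff[OF v(1) w zero_mem, of m] by simp
    moreover have "nB (w m) \<le> nB (\<lambda>x. w m x - w 0 x) + nB (w 0)"
      using norm_triangle_diff[OF w w zero_mem, of m 0] by simp
    ultimately show ?thesis
      using tail[of 0 m] norm_minus_commute[OF v(1) w, of m] by simp
  qed
  then have "nB v \<le> 0 + (nB (w 0) + 2 * a)"
    using LIMSEQ_le_const[OF tendsto_add[OF v(2) tendsto_const]] by blast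
  then show ?thesis
    using v by auto
qed

end

lemma L1_embedding_trans:
  assumes ban2: "complex_banach_in_L1 M B2 n2"
    and emb12: "cont_embedding B1 n1 B2 n2" and emb2: "L1_embedding M B2 n2"
  shows "L1_embedding M B1 n1"
proof -
  interpret B2: banach_in_L1 M B2 n2
    by unfold_locales (fact ban2)
  obtain c1 where sub: "B1 \<subseteq> B2" and c1: "\<And>f. f \<in> B1 \<Longrightarrow> n2 f \<le> c1 * n1 f"
    using emb12 unfolding cont_embedding_def by blast
  obtain c2 where int: "B2 \<subseteq> {f. integrable M f}"
    and c2: "\<And>f. f \<in> B2 \<Longrightarrow> (\<integral>x. cmod (f x) \<partial>M) \<le> c2 * n2 f"
    using emb2 unfolding L1_embedding_def by blast
  have "(\<integral>x. cmod (f x) \<partial>M) \<le> (\<bar>c2\<bar> * c1) * n1 f" if "f \<in> B1" for f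
  proof -
    have "(\<integral>x. cmod (f x) \<partial>M) \<le> c2 * n2 f"
      using c2 sub that by blast
    also have "\<dots> \<le> \<bar>c2\<bar> * n2 f"
      using B2.norm_nonneg sub that by (intro mult_right_mono) auto
    also have "\<dots> \<le> \<bar>c2\<bar> * (c1 * n1 f)"
      using c1 that by (intro mult_left_mono) auto
    finally show ?thesis
      by simp
  qed
  then show ?thesis
    using sub int unfolding L1_embedding_def by blast
qed

section \<open>The closed graph theorem\<close>

locale closed_graph_operator =
  B1: banach_in_L1 M B1 n1 + B2: banach_in_L1 M B2 n2
  for M :: "'a measure" and B1 n1 B2 n2 +
  fixes T :: "('a \<Rightarrow> complex) \<Rightarrow> ('a \<Rightarrow> complex)"
  assumes maps: "f \<in> B1 \<Longrightarrow> T f \<in> B2"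
    and linear_AE: "f \<in> B1 \<Longrightarrow> g \<in> B1 \<Longrightarrow> AE x in M. T (\<lambda>x. a * f x + b * g x) x = a * T f x + b * T g x"
    and closed_graph: "(\<And>k. X k \<in> B1) \<Longrightarrow> f \<in> B1 \<Longrightarrow> g \<in> B2 \<Longrightarrow> (\<lambda>k. n1 (\<lambda>x. X k x - f x)) \<longlonglongrightarrow> 0 \<Longrightarrow>
      (\<lambda>k. n2 (\<lambda>x. T (X k) x - g x)) \<longlonglongrightarrow> 0 \<Longrightarrow> AE x in M. T f x = g x"
begin

lemma norm_image_lincomb:
  assumes "f \<in> B1" "g \<in> B1"
  shows "n2 (T (\<lambda>x. a * f x + b * g x)) = n2 (\<lambda>x. a * T f x + b * T g x)"
proof -
  have "(\<lambda>x. a * T f x + b * T g x) \<in> B2"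
    using assms by (intro B2.lincomb_mem maps)
  moreover have "T (\<lambda>x. a * f x + b * g x) \<in> borel_measurable M"
    using assms by (intro B2.measurable_mem maps B1.lincomb_mem)
  ultimately show ?thesis
    using B2.AE_cong linear_AE[OF assms] by blast
qed

lemma norm_image_lincomb_le:
  assumes "f \<in> B1" "g \<in> B1"
  shows "n2 (T (\<lambda>x. a * f x + b * g x)) \<le> cmod a * n2 (T f) + cmod b * n2 (T g)"
  using norm_image_lincomb[OF assms] B2.norm_triangle[OF B2.scale_mem B2.scale_mem]
    B2.norm_scale maps assms by simp

lemma norm_image_scale:
  assumes "f \<in> B1"
  shows "n2 (T (\<lambda>x. a * f x)) = cmod a * n2 (T f)"
  using norm_image_lincomb[OF assms assms, of a 0] B2.norm_scale[OF maps[OF assms]] by simp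

lemma norm_image_add_diff:
  assumes "f \<in> B1" "h \<in> B1"
  shows "n2 (\<lambda>x. T (\<lambda>x. f x + h x) x - T f x) = n2 (T h)"
proof -
  have "AE x in M. T (\<lambda>x. 1 * f x + 1 * h x) x = 1 * T f x + 1 * T h x"
    by (rule linear_AE[OF assms])
  then have "AE x in M. T (\<lambda>x. f x + h x) x - T f x = T h x"
    by eventually_elim simp
  moreover have "(\<lambda>x. T (\<lambda>x. f x + h x) x - T f x) \<in> borel_measurable M"
    using assms by (intro B2.measurable_mem B2.diff_mem maps B1.add_mem)
  ultimately show ?thesis
    using B2.AE_cong[OF maps[OF assms(2)]] by blast
qed

lemma dense_sublevel_set:
  "\<exists>k x0 \<epsilon>. x0 \<in> B1 \<and> \<epsilon> > 0 \<and> (\<forall>y\<in>B1. n1 (\<lambda>x. x0 x - y x) < \<epsilon> \<longrightarrow>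
      (\<forall>\<delta>>0. \<exists>z\<in>B1. n2 (T z) \<le> real k \<and> n1 (\<lambda>x. y x - z x) < \<delta>))"
proof -
  interpret complete_pseudometric B1 "\<lambda>f g. n1 (\<lambda>x. f x - g x)"
    by (rule B1.complete_pseudometric_norm_dist)
  have "\<exists>k. \<exists>x0\<in>B1. \<exists>\<epsilon>>0. \<forall>y\<in>B1. n1 (\<lambda>x. x0 x - y x) < \<epsilon> \<longrightarrow>
      (\<forall>\<delta>>0. \<exists>z\<in>{f \<in> B1. n2 (T f) \<le> real k}. n1 (\<lambda>x. y x - z x) < \<delta>)"
  proof (rule Baire)
    show "B1 \<noteq> {}"
      using B1.zero_mem by blast
    show "B1 \<subseteq> (\<Union>k. {f \<in> B1. n2 (T f) \<le> real k})"
      using real_arch_simple by blast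
  qed auto
  then show ?thesis
    by blast
qed

lemma approx_small_by_sublevel:
  assumes x0: "x0 \<in> B1"
    and dense: "\<forall>y\<in>B1. n1 (\<lambda>x. x0 x - y x) < \<epsilon> \<longrightarrow>
      (\<forall>\<delta>>0. \<exists>z\<in>B1. n2 (T z) \<le> k \<and> n1 (\<lambda>x. y x - z x) < \<delta>)"
    and g: "g \<in> B1" "n1 g < \<epsilon>" and "\<delta> > 0"
  shows "\<exists>d\<in>B1. n2 (T d) \<le> 2 * k \<and> n1 (\<lambda>x. g x - d x) < \<delta>"
proof -
  have "n1 (\<lambda>x. x0 x - (x0 x + g x)) < \<epsilon>"
    using B1.norm_uminus[OF g(1)] g(2) by simp
  then obtain z where z: "z \<in> B1" "n2 (T z) \<le> k" "n1 (\<lambda>x. (x0 x + g x) - z x) < \<delta> / 2"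
    using dense B1.add_mem[OF x0 g(1)] \<open>\<delta> > 0\<close> by (meson half_gt_zero)
  have "n1 (\<lambda>x. x0 x - x0 x) < \<epsilon>"
    using g B1.norm_nonneg by fastforce
  then obtain w where w: "w \<in> B1" "n2 (T w) \<le> k" "n1 (\<lambda>x. x0 x - w x) < \<delta> / 2"
    using dense x0 \<open>\<delta> > 0\<close> by (meson half_gt_zero)
  have "n2 (T (\<lambda>x. 1 * z x + (-1) * w x)) \<le> 2 * k"
    using norm_image_lincomb_le[OF z(1) w(1), of 1 "-1"] z(2) w(2) by simp
  moreover have "n1 (\<lambda>x. g x - (1 * z x + (-1) * w x)) < \<delta>"
  proof -
    have u: "(\<lambda>x. (x0 x + g x) - z x) \<in> B1"
      using B1.diff_mem[OF B1.add_mem[OF x0 g(1)] z(1)] by simp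
    have v: "(\<lambda>x. x0 x - w x) \<in> B1"
      using B1.diff_mem[OF x0 w(1)] .
    have "n1 (\<lambda>x. ((x0 x + g x) - z x) + (-1) * (x0 x - w x))
        \<le> n1 (\<lambda>x. (x0 x + g x) - z x) + n1 (\<lambda>x. (-1) * (x0 x - w x))"
      by (rule B1.norm_triangle[OF u B1.scale_mem[OF v]])
    also have "n1 (\<lambda>x. (-1) * (x0 x - w x)) = n1 (\<lambda>x. x0 x - w x)"
      using B1.norm_scale[OF v, of "-1"] by simp
    finally have "n1 (\<lambda>x. ((x0 x + g x) - z x) + (-1) * (x0 x - w x)) < \<delta>"
      using z(3) w(3) by simp
    moreover have "(\<lambda>x. ((x0 x + g x) - z x) + (-1) * (x0 x - w x)) = (\<lambda>x. g x - (1 * z x + (-1) * w x))"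
      by (simp add: algebra_simps)
    ultimately show ?thesis
      by simp
  qed
  ultimately show ?thesis
    using B1.lincomb_mem[OF z(1) w(1)] by blast
qed

definition nearly_bounded_by :: "real \<Rightarrow> bool" where
  "nearly_bounded_by c \<longleftrightarrow>
    (\<forall>g\<in>B1. \<forall>t>0. \<forall>\<delta>>0. n1 g < t \<longrightarrow> (\<exists>d\<in>B1. n2 (T d) \<le> c * t \<and> n1 (\<lambda>x. g x - d x) < \<delta>))"

lemma nearly_bounded_by_scaling:
  assumes "\<epsilon> > 0"
    and ball: "\<And>g \<delta>. g \<in> B1 \<Longrightarrow> n1 g < \<epsilon> \<Longrightarrow> \<delta> > 0 \<Longrightarrow>
      \<exists>d\<in>B1. n2 (T d) \<le> k \<and> n1 (\<lambda>x. g x - d x) < \<delta>"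
    and g: "g \<in> B1" "n1 g < t" and "t > 0" "\<delta> > 0"
  shows "\<exists>d\<in>B1. n2 (T d) \<le> (k + 1) / \<epsilon> * t \<and> n1 (\<lambda>x. g x - d x) < \<delta>"
proof -
  define s where "s = \<epsilon> / t"
  have s: "s > 0" "s * t = \<epsilon>"
    using \<open>t > 0\<close> \<open>\<epsilon> > 0\<close> unfolding s_def by simp_all
  have "n1 (\<lambda>x. s * g x) = s * n1 g"
    using B1.norm_scale[OF g(1), of s] s by simp
  also have "\<dots> < \<epsilon>"
    using g(2) s by (metis mult_strict_left_mono)
  finally obtain d where d: "d \<in> B1" "n2 (T d) \<le> k" "n1 (\<lambda>x. s * g x - d x) < s * \<delta>"
    using ball[OF B1.scale_mem[OF g(1)] _ mult_pos_pos[OF s(1) \<open>\<delta> > 0\<close>]] by blast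
  have cs: "cmod (complex_of_real (inverse s)) = inverse s"
    using s by (simp add: norm_inverse)
  have "n2 (T (\<lambda>x. inverse s * d x)) = inverse s * n2 (T d)"
    using norm_image_scale[OF d(1), of "inverse s"] unfolding cs .
  also have "\<dots> \<le> inverse s * (k + 1)"
    using d(2) s by (intro mult_left_mono) auto
  also have "\<dots> = (k + 1) / \<epsilon> * t"
    using s \<open>t > 0\<close> by (auto simp: field_simps)
  finally have bound: "n2 (T (\<lambda>x. inverse s * d x)) \<le> (k + 1) / \<epsilon> * t" .
  have "(\<lambda>x. g x - inverse s * d x) = (\<lambda>x. inverse s * (s * g x - d x))"
    using s by (simp add: field_simps)
  then have "n1 (\<lambda>x. g x - inverse s * d x) = inverse s * n1 (\<lambda>x. s * g x - d x)"
    using B1.norm_scale[OF B1.diff_mem[OF B1.scale_mem[OF g(1)] d(1)], of "inverse s"]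
    unfolding cs by simp
  also have "\<dots> < inverse s * (s * \<delta>)"
    using d(3) s by (intro mult_strict_left_mono) auto
  also have "\<dots> = \<delta>"
    using s by (simp add: field_simps)
  finally show ?thesis
    using bound B1.scale_mem[OF d(1)] by blast
qed

lemma nearly_bounded: "\<exists>c>0. nearly_bounded_by c"
proof -
  obtain k x0 \<epsilon> where x0: "x0 \<in> B1" and "\<epsilon> > 0"
    and dense: "\<forall>y\<in>B1. n1 (\<lambda>x. x0 x - y x) < \<epsilon> \<longrightarrow>
      (\<forall>\<delta>>0. \<exists>z\<in>B1. n2 (T z) \<le> real k \<and> n1 (\<lambda>x. y x - z x) < \<delta>)"
    using dense_sublevel_set by blast
  have "(2 * real k + 1) / \<epsilon> > 0"
    using \<open>\<epsilon> > 0\<close> by simp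
  then show ?thesis
    unfolding nearly_bounded_by_def
    using nearly_bounded_by_scaling[OF \<open>\<epsilon> > 0\<close> approx_small_by_sublevel[OF x0 dense]] by blast
qed

lemma greedy_approximation:
  assumes c: "nearly_bounded_by c"
    and g: "g \<in> B1" "n1 g < t"
  obtains r d where "r 0 = g" "\<And>j. r (Suc j) = (\<lambda>x. r j x - d j x)"
    "\<And>j. r j \<in> B1" "\<And>j. n1 (r j) < t * (1/2)^j" "\<And>j. d j \<in> B1" "\<And>j. n2 (T (d j)) \<le> c * t * (1/2)^j"
proof -
  have "t > 0"
    using g B1.norm_nonneg by (meson le_less_trans)
  have "\<exists>d. h \<in> B1 \<and> n1 h < t * (1/2)^j \<longrightarrow>
      d \<in> B1 \<and> n2 (T d) \<le> c * t * (1/2)^j \<and> n1 (\<lambda>x. h x - d x) < t * (1/2)^Suc j" for h j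
  proof (cases "h \<in> B1 \<and> n1 h < t * (1/2)^j")
    case True
    then obtain d where "d \<in> B1" "n2 (T d) \<le> c * (t * (1/2)^j)" "n1 (\<lambda>x. h x - d x) < t * (1/2)^Suc j"
      using c[unfolded nearly_bounded_by_def, rule_format, of h "t * (1/2)^j" "t * (1/2)^Suc j"] \<open>t > 0\<close> by auto
    then show ?thesis
      by (auto simp: mult.assoc)
  qed auto
  then obtain D where D: "\<And>h j. h \<in> B1 \<Longrightarrow> n1 h < t * (1/2)^j \<Longrightarrow>
      D h j \<in> B1 \<and> n2 (T (D h j)) \<le> c * t * (1/2)^j \<and> n1 (\<lambda>x. h x - D h j x) < t * (1/2)^Suc j"
    by metis
  define r where "r = rec_nat g (\<lambda>j h x. h x - D h j x)"
  have r_simps: "r 0 = g" "r (Suc j) = (\<lambda>x. r j x - D (r j) j x)" for j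
    by (simp_all add: r_def)
  have r: "r j \<in> B1 \<and> n1 (r j) < t * (1/2)^j" for j
  proof (induction j)
    case 0
    show ?case using g by (simp add: r_simps)
  next
    case (Suc j)
    then show ?case using D[of "r j" j] B1.diff_mem by (simp add: r_simps)
  qed
  show ?thesis
    by (rule that[of r "\<lambda>j. D (r j) j"]) (use r_simps r D in auto)
qed

lemma bounded_if_nearly_bounded:
  assumes c: "nearly_bounded_by c"
    and g: "g \<in> B1" "n1 g < t"
  shows "n2 (T g) \<le> 2 * c * t"
proof -
  obtain r d where r: "r 0 = g" "\<And>j. r (Suc j) = (\<lambda>x. r j x - d j x)"
    "\<And>j. r j \<in> B1" "\<And>j. n1 (r j) < t * (1/2)^j"
    and d: "\<And>j. d j \<in> B1" "\<And>j. n2 (T (d j)) \<le> c * t * (1/2)^j"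
    using greedy_approximation[OF c g] by blast
  txt \<open>
    The partial sums \<open>g - r m\<close> of the series of the \<open>d j\<close> converge to \<open>g\<close> in \<open>B1\<close>, and their
    images form a Cauchy sequence in \<open>B2\<close>; the closed graph identifies its limit with \<open>T g\<close>.
  \<close>
  have partial_sum: "(\<lambda>x. g x - r m x) \<in> B1" for m
    using B1.diff_mem g r by blast
  define w where "w m = T (\<lambda>x. g x - r m x)" for m
  have w: "w m \<in> B2" for m
    unfolding w_def using maps partial_sum by blast
  have "(\<lambda>x. g x - r (Suc m) x) = (\<lambda>x. (g x - r m x) + d m x)" for m
    by (simp add: r(2) algebra_simps)
  then have incr: "n2 (\<lambda>x. w (Suc m) x - w m x) \<le> c * t * (1/2)^m" for m
    unfolding w_def using norm_image_add_diff[OF partial_sum d(1)] d(2) by simp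
  obtain v where v: "v \<in> B2" "(\<lambda>m. n2 (\<lambda>x. w m x - v x)) \<longlonglongrightarrow> 0" "n2 v \<le> n2 (w 0) + 2 * (c * t)"
    using B2.convergent_if_geometric_increments[OF w incr] by blast
  have "n2 (w 0) = 0"
    using norm_image_scale[OF g(1), of 0] by (simp add: w_def r(1))
  have "(\<lambda>m. n1 (r m)) \<longlonglongrightarrow> 0"
  proof (rule tendsto_sandwich[of "\<lambda>_. 0" _ _ "\<lambda>m. t * (1/2)^m"])
    show "\<forall>\<^sub>F m in sequentially. n1 (r m) \<le> t * (1/2)^m"
      using r(4) by (simp add: less_imp_le)
    show "(\<lambda>m. t * (1/2)^m) \<longlonglongrightarrow> 0"
      by (intro tendsto_mult_right_zero LIMSEQ_power_zero) simp
  qed (use r(3) B1.norm_nonneg in auto)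
  then have "AE x in M. T g x = v x"
  proof (intro closed_graph[OF partial_sum g(1) v(1)])
    show "(\<lambda>m. n1 (\<lambda>x. (g x - r m x) - g x)) \<longlonglongrightarrow> 0" if "(\<lambda>m. n1 (r m)) \<longlonglongrightarrow> 0"
      using that B1.norm_uminus r(3) by simp
    show "(\<lambda>m. n2 (\<lambda>x. T (\<lambda>x. g x - r m x) x - v x)) \<longlonglongrightarrow> 0"
      using v(2) unfolding w_def .
  qed
  then have "n2 (T g) = n2 v"
    using B2.AE_cong[OF v(1) B2.measurable_mem[OF maps[OF g(1)]]] by blast
  then show ?thesis
    using v(3) \<open>n2 (w 0) = 0\<close> by simp
qed

theorem closed_graph_theorem: "\<exists>c\<ge>0. \<forall>f\<in>B1. n2 (T f) \<le> c * n1 f"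
proof -
  obtain c where "c > 0" and c: "nearly_bounded_by c"
    using nearly_bounded by blast
  have "n2 (T f) \<le> 2 * c * n1 f" if "f \<in> B1" for f
  proof -
    have "n2 (T f) / (2 * c) \<le> t" if "n1 f < t" for t
      using bounded_if_nearly_bounded[OF c \<open>f \<in> B1\<close> that] \<open>c > 0\<close> by (simp add: field_simps)
    then have "n2 (T f) / (2 * c) \<le> n1 f"
      by (rule dense_ge)
    then show ?thesis
      using \<open>c > 0\<close> by (simp add: field_simps)
  qed
  then show ?thesis
    using \<open>c > 0\<close> by (intro exI[of _ "2 * c"]) auto
qed

end

section \<open>Linear contractions of \<open>L\<^sup>1\<close>\<close>

lemma cnj_sgn_mult_self: "cnj (sgn z) * z = complex_of_real (cmod z)"
proof (cases "z = 0")
  case False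
  then show ?thesis
    by (simp add: sgn_eq divide_conv_cnj field_simps power2_eq_square flip: complex_norm_square)
qed simp

lemma borel_measurable_cnj [measurable]: "cnj \<in> borel_measurable borel"
  by (intro borel_measurable_continuous_onI continuous_intros)

lemma integrable_bounded_mult:
  fixes g h :: "'a \<Rightarrow> complex"
  assumes "integrable M g" "h \<in> borel_measurable M" "\<forall>x\<in>space M. cmod (h x) \<le> 1"
  shows "integrable M (\<lambda>x. h x * g x)"
proof (rule Bochner_Integration.integrable_bound[OF assms(1)])
  show "(\<lambda>x. h x * g x) \<in> borel_measurable M"
    using assms by measurable
  show "AE x in M. norm (h x * g x) \<le> norm (g x)"
    using assms(3) by (intro AE_I2) (auto simp: norm_mult intro: mult_left_le_one_le)
qed

lemma AE_zero_if_integrals_vanish: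
  fixes u :: "'a \<Rightarrow> complex"
  assumes u: "integrable M u"
    and vanish: "\<And>h. h \<in> borel_measurable M \<Longrightarrow> \<forall>x\<in>space M. cmod (h x) \<le> 1 \<Longrightarrow> (\<integral>x. h x * u x \<partial>M) = 0"
  shows "AE x in M. u x = 0"
proof -
  have [measurable]: "u \<in> borel_measurable M"
    using u by (rule borel_measurable_integrable)
  have "(\<integral>x. cnj (sgn (u x)) * u x \<partial>M) = 0"
    by (intro vanish) (auto simp: norm_sgn)
  then have "(\<integral>x. cmod (u x) \<partial>M) = 0"
    by (simp add: cnj_sgn_mult_self)
  then have "AE x in M. cmod (u x) = 0"
    using integral_nonneg_eq_0_iff_AE[of M "\<lambda>x. cmod (u x)"] u by auto
  then show ?thesis
    by simp
qed

lemma AE_eq_if_L1_limits: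
  fixes u :: "nat \<Rightarrow> 'a \<Rightarrow> complex"
  assumes u: "\<And>k. integrable M (u k)" and f: "integrable M f" and g: "integrable M g"
    and lim_f: "(\<lambda>k. \<integral>x. cmod (u k x - f x) \<partial>M) \<longlonglongrightarrow> 0"
    and lim_g: "(\<lambda>k. \<integral>x. cmod (u k x - g x) \<partial>M) \<longlonglongrightarrow> 0"
  shows "AE x in M. f x = g x"
proof -
  have bound: "(\<integral>x. cmod (f x - g x) \<partial>M) \<le> (\<integral>x. cmod (u k x - f x) \<partial>M) + (\<integral>x. cmod (u k x - g x) \<partial>M)"
    for k
  proof -
    have "(\<integral>x. cmod (f x - g x) \<partial>M) \<le> (\<integral>x. cmod (u k x - f x) + cmod (u k x - g x) \<partial>M)"
    proof (rule integral_mono)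
      show "cmod (f x - g x) \<le> cmod (u k x - f x) + cmod (u k x - g x)" for x
        using norm_triangle_ineq[of "f x - u k x" "u k x - g x"] by (simp add: norm_minus_commute)
    qed (use u f g in auto)
    also have "\<dots> = (\<integral>x. cmod (u k x - f x) \<partial>M) + (\<integral>x. cmod (u k x - g x) \<partial>M)"
      using u f g by (intro Bochner_Integration.integral_add) auto
    finally show ?thesis .
  qed
  have "(\<integral>x. cmod (f x - g x) \<partial>M) \<le> 0"
    using bound by (intro tendsto_le[OF _ tendsto_add_zero[OF lim_f lim_g] tendsto_const]) auto
  then have "(\<integral>x. cmod (f x - g x) \<partial>M) = 0"
    by (simp add: order_antisym)
  then have "AE x in M. cmod (f x - g x) = 0"
    using f g by (subst (asm) integral_nonneg_eq_0_iff_AE) auto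
  then show ?thesis
    by simp
qed

text \<open>
  Linearity is required only almost everywhere, and for arguments that agree with the linear
  combination only almost everywhere; in this form it is inherited by iterates.
\<close>

locale linear_L1_contraction =
  fixes M :: "'a measure" and T :: "('a \<Rightarrow> complex) \<Rightarrow> ('a \<Rightarrow> complex)"
  assumes integrable_image: "integrable M f \<Longrightarrow> integrable M (T f)"
    and L1_norm_image_le: "integrable M f \<Longrightarrow> (\<integral>x. cmod (T f x) \<partial>M) \<le> (\<integral>x. cmod (f x) \<partial>M)"
    and linear_AE: "integrable M f \<Longrightarrow> integrable M g \<Longrightarrow> integrable M h \<Longrightarrow>
      (AE x in M. h x = a * f x + b * g x) \<Longrightarrow> AE x in M. T h x = a * T f x + b * T g x"

context
  fixes M :: "'a measure" and F :: "'a \<Rightarrow> 'a" and L :: "('a \<Rightarrow> complex) \<Rightarrow> ('a \<Rightarrow> complex)"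
  assumes F: "F \<in> M \<rightarrow>\<^sub>M M" and tr: "transfer_operator M F L"
begin

lemma transfer_operator_integrable: "integrable M g \<Longrightarrow> integrable M (L g)"
  using tr unfolding transfer_operator_def by blast

lemma bounded_measurable_comp:
  assumes "h \<in> borel_measurable M" "\<forall>x\<in>space M. cmod (h x) \<le> 1"
  shows "(\<lambda>x. h (F x)) \<in> borel_measurable M" "\<forall>x\<in>space M. cmod (h (F x)) \<le> 1"
  using assms measurable_space[OF F] measurable_compose[OF F] by auto

lemma transfer_operator_duality:
  assumes "integrable M g" "h \<in> borel_measurable M" "\<forall>x\<in>space M. cmod (h x) \<le> 1"
  shows "(\<integral>x. h x * L g x \<partial>M) = (\<integral>x. h (F x) * g x \<partial>M)"
proof -
  have "(\<integral>x. g x * h (F x) \<partial>M) = (\<integral>x. h x * L g x \<partial>M)"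
    using tr assms unfolding transfer_operator_def by blast
  then show ?thesis
    by (simp add: mult.commute)
qed

lemma transfer_operator_L1_norm_le:
  assumes f: "integrable M f"
  shows "(\<integral>x. cmod (L f x) \<partial>M) \<le> (\<integral>x. cmod (f x) \<partial>M)"
proof -
  let ?h = "\<lambda>x. cnj (sgn (L f x))"
  have [measurable]: "L f \<in> borel_measurable M"
    using transfer_operator_integrable[OF f] by (rule borel_measurable_integrable)
  have h: "?h \<in> borel_measurable M" "\<forall>x\<in>space M. cmod (?h x) \<le> 1"
    by (auto simp: norm_sgn)
  note hF = bounded_measurable_comp[OF h]
  have "(\<integral>x. cmod (L f x) \<partial>M) = cmod (complex_of_real (\<integral>x. cmod (L f x) \<partial>M))"
    by simp
  also have "\<dots> = cmod (\<integral>x. ?h (F x) * f x \<partial>M)"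
    using transfer_operator_duality[OF f h] by (simp add: cnj_sgn_mult_self)
  also have "\<dots> \<le> (\<integral>x. cmod (?h (F x) * f x) \<partial>M)"
    by (rule Bochner_Integration.integral_norm_bound)
  also have "\<dots> \<le> (\<integral>x. cmod (f x) \<partial>M)"
    using f hF integrable_norm[OF integrable_bounded_mult[OF f hF]]
    by (intro integral_mono) (auto simp: norm_mult intro: mult_left_le_one_le)
  finally show ?thesis .
qed

lemma transfer_operator_linear_AE:
  assumes fgh: "integrable M f" "integrable M g" "integrable M h"
    and ae: "AE x in M. h x = a * f x + b * g x"
  shows "AE x in M. L h x = a * L f x + b * L g x"
proof -
  have "AE x in M. L h x - (a * L f x + b * L g x) = 0"
  proof (rule AE_zero_if_integrals_vanish)
    show "integrable M (\<lambda>x. L h x - (a * L f x + b * L g x))"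
      using transfer_operator_integrable fgh by auto
    fix k assume k: "k \<in> borel_measurable M" "\<forall>x\<in>space M. cmod (k x) \<le> 1"
    have kL: "integrable M (\<lambda>x. k x * L u x)" if "integrable M u" for u
      using integrable_bounded_mult[OF transfer_operator_integrable[OF that] k] .
    have kF: "integrable M (\<lambda>x. k (F x) * u x)" if "integrable M u" for u
      using integrable_bounded_mult[OF that bounded_measurable_comp[OF k]] .
    have "(\<integral>x. k x * (L h x - (a * L f x + b * L g x)) \<partial>M)
        = (\<integral>x. k x * L h x - (a * (k x * L f x) + b * (k x * L g x)) \<partial>M)"
      by (simp add: algebra_simps)
    also have "\<dots> = (\<integral>x. k x * L h x \<partial>M) - (a * (\<integral>x. k x * L f x \<partial>M) + b * (\<integral>x. k x * L g x \<partial>M))"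
      using kL fgh by simp
    also have "\<dots> = (\<integral>x. k (F x) * h x \<partial>M) - (a * (\<integral>x. k (F x) * f x \<partial>M) + b * (\<integral>x. k (F x) * g x \<partial>M))"
      using transfer_operator_duality[OF _ k] fgh by simp
    also have "\<dots> = (\<integral>x. k (F x) * h x - (a * (k (F x) * f x) + b * (k (F x) * g x)) \<partial>M)"
      using kF fgh by simp
    also have "\<dots> = 0"
    proof (rule integral_eq_zero_AE)
      show "AE x in M. k (F x) * h x - (a * (k (F x) * f x) + b * (k (F x) * g x)) = 0"
        using ae by eventually_elim (simp add: algebra_simps)
    qed
    finally show "(\<integral>x. k x * (L h x - (a * L f x + b * L g x)) \<partial>M) = 0" .
  qed
  then show ?thesis
    by simp
qed

lemma linear_L1_contraction_transfer_operator: "linear_L1_contraction M L"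
  by unfold_locales
    (fact transfer_operator_integrable transfer_operator_L1_norm_le transfer_operator_linear_AE)+

end

context linear_L1_contraction
begin

lemma comp:
  assumes "linear_L1_contraction M S"
  shows "linear_L1_contraction M (\<lambda>f. S (T f))"
proof -
  interpret S: linear_L1_contraction M S by (rule assms)
  show ?thesis
  proof
    show "integrable M (S (T f))" if "integrable M f" for f
      using that by (intro S.integrable_image integrable_image)
    show "(\<integral>x. cmod (S (T f) x) \<partial>M) \<le> (\<integral>x. cmod (f x) \<partial>M)" if "integrable M f" for f
      using S.L1_norm_image_le[OF integrable_image] L1_norm_image_le that by (meson order_trans)
    show "AE x in M. S (T h) x = a * S (T f) x + b * S (T g) x"
      if "integrable M f" "integrable M g" "integrable M h" "AE x in M. h x = a * f x + b * g x" for f g h a b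
      using S.linear_AE[OF integrable_image integrable_image integrable_image linear_AE] that by blast
  qed
qed

lemma funpow: "linear_L1_contraction M (T ^^ n)"
proof (induction n)
  case 0
  show ?case
    by unfold_locales auto
next
  case (Suc n)
  then show ?case
    using linear_L1_contraction.comp[OF Suc] unfolding funpow.simps comp_def
    by (simp add: linear_L1_contraction_axioms)
qed

lemma mult_bounded:
  assumes u: "u \<in> borel_measurable M" "\<forall>x\<in>space M. cmod (u x) \<le> 1"
  shows "linear_L1_contraction M (\<lambda>f. T (\<lambda>x. u x * f x))"
proof
  show "integrable M (T (\<lambda>x. u x * f x))" if "integrable M f" for f
    using integrable_bounded_mult[OF that u] by (rule integrable_image)
  show "(\<integral>x. cmod (T (\<lambda>x. u x * f x) x) \<partial>M) \<le> (\<integral>x. cmod (f x) \<partial>M)" if f: "integrable M f" for f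
  proof -
    have "(\<integral>x. cmod (T (\<lambda>x. u x * f x) x) \<partial>M) \<le> (\<integral>x. cmod (u x * f x) \<partial>M)"
      using integrable_bounded_mult[OF f u] by (rule L1_norm_image_le)
    also have "\<dots> \<le> (\<integral>x. cmod (f x) \<partial>M)"
      using f u integrable_norm[OF integrable_bounded_mult[OF f u]]
      by (intro integral_mono) (auto simp: norm_mult intro: mult_left_le_one_le)
    finally show ?thesis .
  qed
  show "AE x in M. T (\<lambda>x. u x * h x) x = a * T (\<lambda>x. u x * f x) x + b * T (\<lambda>x. u x * g x) x"
    if fgh: "integrable M f" "integrable M g" "integrable M h" and ae: "AE x in M. h x = a * f x + b * g x"
    for f g h a b
  proof (rule linear_AE)
    show "integrable M (\<lambda>x. u x * f x)" "integrable M (\<lambda>x. u x * g x)" "integrable M (\<lambda>x. u x * h x)"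
      using integrable_bounded_mult[OF _ u] fgh by blast+
    show "AE x in M. u x * h x = a * (u x * f x) + b * (u x * g x)"
      using ae by eventually_elim (simp add: algebra_simps)
  qed
qed

lemma L1_dist_image_le:
  assumes "integrable M f" "integrable M g"
  shows "(\<integral>x. cmod (T f x - T g x) \<partial>M) \<le> (\<integral>x. cmod (f x - g x) \<partial>M)"
proof -
  have "(\<integral>x. cmod (T f x - T g x) \<partial>M) = (\<integral>x. cmod (T (\<lambda>x. f x - g x) x) \<partial>M)"
  proof (rule integral_cong_AE)
    have "integrable M (T f)" "integrable M (T g)" "integrable M (T (\<lambda>x. f x - g x))"
      using assms by (auto intro: integrable_image)
    then show "(\<lambda>x. cmod (T f x - T g x)) \<in> borel_measurable M"
      "(\<lambda>x. cmod (T (\<lambda>x. f x - g x) x)) \<in> borel_measurable M"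
      by (auto intro!: borel_measurable_integrable)
    have "AE x in M. T (\<lambda>x. f x - g x) x = 1 * T f x + (-1) * T g x"
      using assms by (intro linear_AE) auto
    then show "AE x in M. cmod (T f x - T g x) = cmod (T (\<lambda>x. f x - g x) x)"
      by eventually_elim simp
  qed
  also have "\<dots> \<le> (\<integral>x. cmod (f x - g x) \<partial>M)"
    using assms by (intro L1_norm_image_le) auto
  finally show ?thesis .
qed

lemma closed_graph_operatorI:
  assumes ban1: "complex_banach_in_L1 M B1 n1" and ban2: "complex_banach_in_L1 M B2 n2"
    and emb12: "cont_embedding B1 n1 B2 n2" and emb2: "L1_embedding M B2 n2"
    and maps: "\<And>f. f \<in> B1 \<Longrightarrow> T f \<in> B2"
  shows "closed_graph_operator M B1 n1 B2 n2 T"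
proof -
  interpret B1: banach_in_L1 M B1 n1
    by unfold_locales (fact ban1)
  interpret B2: banach_in_L1 M B2 n2
    by unfold_locales (fact ban2)
  have emb1: "L1_embedding M B1 n1"
    by (rule L1_embedding_trans[OF ban2 emb12 emb2])
  show ?thesis
  proof unfold_locales
    show "T f \<in> B2" if "f \<in> B1" for f
      using maps that .
    show "AE x in M. T (\<lambda>x. a * f x + b * g x) x = a * T f x + b * T g x" if "f \<in> B1" "g \<in> B1" for a b f g
      using that by (intro linear_AE B1.integrable_mem B1.lincomb_mem) simp_all
    show "AE x in M. T f x = g x"
      if X: "\<And>k. X k \<in> B1" and f: "f \<in> B1" and g: "g \<in> B2"
        and lim1: "(\<lambda>k. n1 (\<lambda>x. X k x - f x)) \<longlonglongrightarrow> 0" and lim2: "(\<lambda>k. n2 (\<lambda>x. T (X k) x - g x)) \<longlonglongrightarrow> 0"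
      for X f g
    proof (rule AE_eq_if_L1_limits[where u = "\<lambda>k. T (X k)"])
      show "integrable M (T (X k))" for k
        using X by (intro integrable_image B1.integrable_mem)
      show "integrable M (T f)"
        using f by (intro integrable_image B1.integrable_mem)
      show "integrable M g"
        using g by (rule B2.integrable_mem)
      show "(\<lambda>k. \<integral>x. cmod (T (X k) x - g x) \<partial>M) \<longlonglongrightarrow> 0"
        by (rule B2.L1_norm_tendsto_zero[OF emb2 B2.diff_mem[OF maps[OF X] g] lim2])
      show "(\<lambda>k. \<integral>x. cmod (T (X k) x - T f x) \<partial>M) \<longlonglongrightarrow> 0"
      proof (rule tendsto_sandwich[of "\<lambda>_. 0" _ _ "\<lambda>k. \<integral>x. cmod (X k x - f x) \<partial>M"])
        show "\<forall>\<^sub>F k in sequentially. (\<integral>x. cmod (T (X k) x - T f x) \<partial>M) \<le> (\<integral>x. cmod (X k x - f x) \<partial>M)"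
          using X f by (intro always_eventually allI L1_dist_image_le B1.integrable_mem)
        show "(\<lambda>k. \<integral>x. cmod (X k x - f x) \<partial>M) \<longlonglongrightarrow> 0"
          by (rule B1.L1_norm_tendsto_zero[OF emb1 B1.diff_mem[OF X f] lim1])
      qed simp_all
    qed
  qed
qed

end

section \<open>Boundedness of the twisted transfer operators\<close>

lemma linear_L1_contraction_twisted_power:
  assumes "F \<in> M \<rightarrow>\<^sub>M M" "transfer_operator M F L" "\<phi> \<in> borel_measurable M"
  shows "linear_L1_contraction M (twisted L \<phi> s ^^ n)"
proof -
  have "linear_L1_contraction M (twisted L \<phi> s)"
    unfolding twisted_def[abs_def]
    using assms by (intro linear_L1_contraction.mult_bounded linear_L1_contraction_transfer_operator) auto
  then show ?thesis
    by (rule linear_L1_contraction.funpow)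
qed

lemma op_norm_nonneg:
  assumes ban1: "complex_banach_in_L1 M B1 n1" and ban2: "complex_banach_in_L1 M B2 n2"
    and maps: "\<And>f. f \<in> B1 \<Longrightarrow> T f \<in> B2"
    and bound: "c \<ge> 0" "\<And>f. f \<in> B1 \<Longrightarrow> n2 (T f) \<le> c * n1 f"
  shows "0 \<le> op_norm B1 n1 n2 T"
proof -
  interpret B1: banach_in_L1 M B1 n1
    by unfold_locales (fact ban1)
  interpret B2: banach_in_L1 M B2 n2
    by unfold_locales (fact ban2)
  let ?S = "{n2 (T f) | f. f \<in> B1 \<and> n1 f \<le> 1}"
  have "bdd_above ?S"
  proof (rule bdd_aboveI)
    fix y assume "y \<in> ?S"
    then obtain f where f: "f \<in> B1" "n1 f \<le> 1" "y = n2 (T f)"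
      by blast
    have "n2 (T f) \<le> c * n1 f"
      using bound(2)[OF f(1)] .
    also have "\<dots> \<le> c"
      using f(2) bound(1) by (simp add: mult_left_le)
    finally show "y \<le> c"
      using f(3) by simp
  qed
  moreover have "n2 (T (\<lambda>_. 0)) \<in> ?S"
    using B1.zero_mem by auto
  ultimately have "n2 (T (\<lambda>_. 0)) \<le> op_norm B1 n1 n2 T"
    unfolding op_norm_def by (rule cSup_upper[rotated])
  then show ?thesis
    using B2.norm_nonneg[OF maps[OF B1.zero_mem]] by linarith
qed

lemma op_norm_twisted_power_nonneg:
  assumes F: "F \<in> M \<rightarrow>\<^sub>M M" and tr: "transfer_operator M F L" and phi: "\<phi> \<in> borel_measurable M"
    and ban1: "complex_banach_in_L1 M B1 n1" and ban2: "complex_banach_in_L1 M B2 n2"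
    and emb12: "cont_embedding B1 n1 B2 n2" and emb2: "L1_embedding M B2 n2"
    and act1: "\<And>f. f \<in> B1 \<Longrightarrow> twisted L \<phi> s f \<in> B1"
  shows "0 \<le> op_norm B1 n1 n2 (twisted L \<phi> s ^^ n)"
proof -
  have maps: "(twisted L \<phi> s ^^ n) f \<in> B2" if "f \<in> B1" for f
  proof -
    have "(twisted L \<phi> s ^^ n) f \<in> B1"
      using that act1 by (induction n) auto
    then show ?thesis
      using emb12 unfolding cont_embedding_def by blast
  qed
  have "closed_graph_operator M B1 n1 B2 n2 (twisted L \<phi> s ^^ n)"
    using linear_L1_contraction_twisted_power[OF F tr phi]
    by (rule linear_L1_contraction.closed_graph_operatorI[OF _ ban1 ban2 emb12 emb2 maps])
  then obtain c where "c \<ge> 0" "\<And>f. f \<in> B1 \<Longrightarrow> n2 ((twisted L \<phi> s ^^ n) f) \<le> c * n1 f"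
    using closed_graph_operator.closed_graph_theorem by blast
  then show ?thesis
    using op_norm_nonneg[where T = "twisted L \<phi> s ^^ n", OF ban1 ban2 maps] by blast
qed

section \<open>Integral estimates\<close>

lemma stretched_exp_bound_weaken:
  fixes x y \<alpha> C N :: real
  assumes "1 \<le> x" "0 \<le> \<alpha>" "0 \<le> C" "0 \<le> y" "N \<le> C * x powr \<alpha> * exp (- C * y)"
  shows "N \<le> C * x powr \<alpha> * exp (- y * C * x powr (- \<alpha>))"
proof -
  have "x powr (- \<alpha>) \<le> 1"
    using powr_mono[of "- \<alpha>" 0 x] assms by simp
  then have "y * C * x powr (- \<alpha>) \<le> y * C"
    using assms by (simp add: mult_left_le)
  then have "exp (- C * y) \<le> exp (- y * C * x powr (- \<alpha>))"
    by (simp add: mult.commute)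
  then show ?thesis
    using assms(3,5) by (meson order_trans mult_left_mono mult_nonneg_nonneg powr_ge_zero)
qed

lemma abs_set_integral_le_interval_bound:
  fixes f :: "real \<Rightarrow> real"
  assumes "R \<ge> 0" "c \<ge> 0" and f: "\<And>s. s \<in> S \<Longrightarrow> 0 \<le> f s \<and> f s \<le> c" and "S \<subseteq> {-R..R}"
  shows "\<bar>LINT s:S|lborel. f s\<bar> \<le> c * (2 * R)"
proof -
  have nonneg: "0 \<le> (LINT s:S|lborel. f s)"
    unfolding set_lebesgue_integral_def
    by (rule Bochner_Integration.integral_nonneg) (use f in \<open>auto simp: indicator_def\<close>)
  have "(LINT s:S|lborel. f s) \<le> c * (2 * R)"
  proof (cases "integrable lborel (\<lambda>s. indicator S s *\<^sub>R f s)")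
    case True
    have "(LINT s:S|lborel. f s) \<le> (LINT s|lborel. indicator {-R..R} s * c)"
      unfolding set_lebesgue_integral_def
    proof (rule integral_mono[OF True])
      show "integrable lborel (\<lambda>s. indicator {-R..R} s * c)"
        by (intro integrable_mult_left) (simp add: integrable_indicator_iff emeasure_lborel_Icc_eq)
      show "indicator S s *\<^sub>R f s \<le> indicator {-R..R} s * c" for s
        using f[of s] assms(2,4) by (cases "s \<in> S") (auto simp: indicator_def)
    qed
    also have "\<dots> = c * (2 * R)"
      using assms(1) by simp
    finally show ?thesis .
  next
    case False
    then show ?thesis
      unfolding set_lebesgue_integral_def using not_integrable_integral_eq[OF False] assms(1,2) by simp
  qed
  then show ?thesis
    using nonneg by simp
qed

lemma truncated_integral_small_o:
  fixes N :: "nat \<Rightarrow> real \<Rightarrow> real"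
  assumes "1 \<le> K" "0 \<le> d" "0 < C" "0 \<le> \<alpha>" "0 < \<alpha>1" "0 < B"
    and bound: "\<And>n s. n0 \<le> n \<Longrightarrow> K < \<bar>s\<bar> \<Longrightarrow> 0 \<le> N n s \<and> N n s \<le> C * \<bar>s\<bar> powr \<alpha> * exp (- C * real n powr \<alpha>1)"
  shows "(\<lambda>n. LBINT s:{s. K < \<bar>s\<bar> \<and> \<bar>s\<bar> < B * real n powr ((r - 1) / 2)}. N n s / \<bar>s\<bar> powr d)
    \<in> o(\<lambda>n. real n powr (- r / 2))"
proof -
  define g where "g n = 2 * C * (B * real n powr ((r - 1) / 2)) powr (1 + \<alpha>) * exp (- C * real n powr \<alpha>1)"
    for n :: nat
  have "g \<in> o(\<lambda>n. real n powr (- r / 2))"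
    unfolding g_def using assms(3-6) by real_asymp
  moreover have "(\<lambda>n. LBINT s:{s. K < \<bar>s\<bar> \<and> \<bar>s\<bar> < B * real n powr ((r - 1) / 2)}. N n s / \<bar>s\<bar> powr d) \<in> O(g)"
  proof (rule bigoI[of _ 1], unfold eventually_at_top_linorder, intro exI allI impI)
    fix n assume "n0 \<le> n"
    define R where "R = B * real n powr ((r - 1) / 2)"
    define c where "c = C * R powr \<alpha> * exp (- C * real n powr \<alpha>1)"
    have "R \<ge> 0" "c \<ge> 0"
      using assms unfolding R_def c_def by simp_all
    have "\<bar>LBINT s:{s. K < \<bar>s\<bar> \<and> \<bar>s\<bar> < R}. N n s / \<bar>s\<bar> powr d\<bar> \<le> c * (2 * R)"
    proof (rule abs_set_integral_le_interval_bound[OF \<open>R \<ge> 0\<close> \<open>c \<ge> 0\<close>])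
      fix s assume "s \<in> {s. K < \<bar>s\<bar> \<and> \<bar>s\<bar> < R}"
      then have s: "1 \<le> \<bar>s\<bar>" "K < \<bar>s\<bar>" "\<bar>s\<bar> \<le> R"
        using assms(1) by auto
      have "1 \<le> \<bar>s\<bar> powr d"
        using s assms(2) by (intro ge_one_powr_ge_zero) auto
      have N: "0 \<le> N n s" "N n s \<le> C * \<bar>s\<bar> powr \<alpha> * exp (- C * real n powr \<alpha>1)"
        using bound[OF \<open>n0 \<le> n\<close> s(2)] by auto
      have "N n s / \<bar>s\<bar> powr d \<le> N n s"
        using divide_left_mono[OF \<open>1 \<le> \<bar>s\<bar> powr d\<close> N(1)] s(1) by (cases "s = 0") auto
      also have "\<dots> \<le> c"
        unfolding c_def using N(2) s assms by (meson order_trans mult_right_mono mult_left_mono powr_mono2 exp_ge_zero less_imp_le abs_ge_zero)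
      finally show "0 \<le> N n s / \<bar>s\<bar> powr d \<and> N n s / \<bar>s\<bar> powr d \<le> c"
        using N(1) by simp
    qed auto
    also have "c * (2 * R) = g n"
      using \<open>R \<ge> 0\<close> unfolding c_def g_def R_def[symmetric] by (simp add: powr_add algebra_simps)
    finally show "norm (LBINT s:{s. K < \<bar>s\<bar> \<and> \<bar>s\<bar> < B * real n powr ((r - 1) / 2)}. N n s / \<bar>s\<bar> powr d)
        \<le> 1 * norm (g n)"
      unfolding R_def by simp
  qed
  ultimately show ?thesis
    using landau_o.big_small_trans by blast
qed

theorem lemma4p7:
  fixes M :: "'a measure" and F :: "'a \<Rightarrow> 'a"
    and L :: "('a \<Rightarrow> complex) \<Rightarrow> ('a \<Rightarrow> complex)"
    and \<phi> :: "'a \<Rightarrow> real"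
    and B1 B2 :: "('a \<Rightarrow> complex) set" and n1 n2 :: "('a \<Rightarrow> complex) \<Rightarrow> real"
    and \<alpha>1 K C \<alpha> :: real and n0 :: nat
  assumes sys: "prob_preserving_system M F"
    and tr: "transfer_operator M F L"
    and phi_meas: "\<phi> \<in> borel_measurable M"
    and ban1: "complex_banach_in_L1 M B1 n1"
    and ban2: "complex_banach_in_L1 M B2 n2"
    and emb12: "cont_embedding B1 n1 B2 n2"
    and emb2: "L1_embedding M B2 n2"
    and one: "(\<lambda>_. 1) \<in> B1"
    and act1: "\<And>s f. f \<in> B1 \<Longrightarrow> twisted L \<phi> s f \<in> B1"
    and act2: "\<And>s f. f \<in> B2 \<Longrightarrow> twisted L \<phi> s f \<in> B2"
    and a1: "0 < \<alpha>1" "\<alpha>1 \<le> 1" and K: "K > 0" and C: "C > 0" and a: "\<alpha> > 0"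
    and bound: "\<And>n s. n \<ge> n0 \<Longrightarrow> \<bar>s\<bar> > K \<Longrightarrow>
        op_norm B1 n1 n2 (twisted L \<phi> s ^^ n) \<le> C * \<bar>s\<bar> powr \<alpha> * exp (- C * real n powr \<alpha>1)"
  shows "(\<exists>K' C' \<alpha>' \<alpha>1' \<delta> n1'. K' > 0 \<and> C' > 0 \<and> \<alpha>' \<ge> 0 \<and> 0 < \<alpha>1' \<and> \<alpha>1' \<le> 1 \<and> \<delta> > 0 \<and>
           (\<forall>s n. \<bar>s\<bar> > K' \<and> n \<ge> n1' \<longrightarrow>
              op_norm B1 n1 n2 (twisted L \<phi> s ^^ n)
                \<le> C' * \<bar>s\<bar> powr \<alpha>' * exp (- (real n powr \<alpha>1') * \<delta> * \<bar>s\<bar> powr (- \<alpha>'))))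
       \<and> (\<forall>r d1 B. r \<ge> 0 \<longrightarrow> 0 \<le> d1 \<longrightarrow> d1 \<le> 1 \<longrightarrow> B > 0 \<longrightarrow>
           (\<exists>K''>0. (\<lambda>n::nat. LINT s:{s. K'' < \<bar>s\<bar> \<and> \<bar>s\<bar> < B * real n powr ((r - 1) / 2)}|lborel.
                  op_norm B1 n1 n2 (twisted L \<phi> s ^^ n) / \<bar>s\<bar> powr d1)
              \<in> o(\<lambda>n. real n powr (- r / 2))))"
proof -
  have F: "F \<in> M \<rightarrow>\<^sub>M M"
    using sys unfolding prob_preserving_system_def by blast
  define K1 where "K1 = max K 1"
  have K1: "0 < K1" "1 \<le> K1" "K \<le> K1"
    unfolding K1_def using K by auto
  have decay: "0 \<le> op_norm B1 n1 n2 (twisted L \<phi> s ^^ n) \<and>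
      op_norm B1 n1 n2 (twisted L \<phi> s ^^ n) \<le> C * \<bar>s\<bar> powr \<alpha> * exp (- C * real n powr \<alpha>1)"
    if "n0 \<le> n" "K1 < \<bar>s\<bar>" for n s
    using op_norm_twisted_power_nonneg[OF F tr phi_meas ban1 ban2 emb12 emb2 act1] bound[OF that(1)] that(2) K1
    by auto
  have weakened: "op_norm B1 n1 n2 (twisted L \<phi> s ^^ n)
      \<le> C * \<bar>s\<bar> powr \<alpha> * exp (- (real n powr \<alpha>1) * C * \<bar>s\<bar> powr (- \<alpha>))"
    if "K1 < \<bar>s\<bar>" "n0 \<le> n" for s n
    using decay[OF that(2,1)] that K1 C a by (intro stretched_exp_bound_weaken) auto
  have small: "(\<lambda>n. LBINT s:{s. K1 < \<bar>s\<bar> \<and> \<bar>s\<bar> < B * real n powr ((r - 1) / 2)}.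
      op_norm B1 n1 n2 (twisted L \<phi> s ^^ n) / \<bar>s\<bar> powr d1) \<in> o(\<lambda>n. real n powr (- r / 2))"
    if "0 \<le> d1" "0 < B" for r d1 B
    by (rule truncated_integral_small_o[OF K1(2) that(1) C less_imp_le[OF a] a1(1) that(2) decay])
  show ?thesis
    using weakened small K1(1) C less_imp_le[OF a] a1 by blast
qed

end
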